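(* Let $V^1$ and $V^2$ be $\mathbb{Q}$-VASRs of dimensions $d$ and $e$ respectively, and let $T\in\mathbb{Q}^{e\times d}$ be a matrix such that $V^1\Vdash_T V^2$. Then $T$ is coherent with respect to $V^1$.
   Context: A $\mathbb{Q}$-VASR of dimension $d$ is a finite set $V\subseteq\{0,1\}^d\times\mathbb{Q}^d$ of transformers $(\vec r,\vec a)$ (reset vector $\vec r$, addition vector $\vec a$); it defines the transition system on $\mathbb{Q}^d$ with $\vec u\to_V\vec v$ iff $\vec v=\vec r*\vec u+\vec a$ for some $(\vec r,\vec a)\in V$, where $*$ is the pointwise product. $V^1\Vdash_TV^2$ means $T$ is a linear simulation: for all $\vec u,\vec v\in\mathbb{Q}^d$ with $\vec u\to_{V^1}\vec v$ we have $T\vec u\to_{V^2}T\vec v$. Dimensions $i,j\in\{1,\dots,d\}$ are coherent dimensions of $V$ if $r_i=r_j$ for every $(\vec r,\vec a)\in V$; this is an equivalence relation whose classes are the coherence classes of $V$. A matrix $T\in\mathbb{Q}^{e\times d}$ is coherent with respect to $V$ iff each of its rows has nonzero entries only in columns belonging to a single coherence class of $V$. *)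

theory Defs
  imports "HOL-Analysis.Analysis"
begin

definition qvasr :: "((rat ^ 'd) \<times> (rat ^ 'd)) set \<Rightarrow> bool" where
  "qvasr V \<longleftrightarrow> finite V \<and> (\<forall>(r, a) \<in> V. \<forall>i. r $ i \<in> {0, 1})"

definition vasr_step :: "((rat ^ 'd) \<times> (rat ^ 'd)) set \<Rightarrow> rat ^ 'd \<Rightarrow> rat ^ 'd \<Rightarrow> bool" where
  "vasr_step V u v \<longleftrightarrow> (\<exists>(r, a) \<in> V. v = (\<chi> i. r $ i * u $ i + a $ i))"

definition lin_sim :: "((rat ^ 'd) \<times> (rat ^ 'd)) set \<Rightarrow> rat ^ 'd ^ 'e \<Rightarrow> ((rat ^ 'e) \<times> (rat ^ 'e)) set \<Rightarrow> bool" where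
  "lin_sim V1 T V2 \<longleftrightarrow> (\<forall>u v. vasr_step V1 u v \<longrightarrow> vasr_step V2 (T *v u) (T *v v))"

definition coherent_dims :: "((rat ^ 'd) \<times> (rat ^ 'd)) set \<Rightarrow> 'd \<Rightarrow> 'd \<Rightarrow> bool" where
  "coherent_dims V i j \<longleftrightarrow> (\<forall>(r, a) \<in> V. r $ i = r $ j)"

definition coherent_matrix :: "((rat ^ 'd) \<times> (rat ^ 'd)) set \<Rightarrow> rat ^ 'd ^ 'e \<Rightarrow> bool" where
  "coherent_matrix V T \<longleftrightarrow> (\<forall>k. \<exists>i. \<forall>j. T $ k $ j \<noteq> 0 \<longrightarrow> coherent_dims V i j)"

end

theory Submission
  imports Defs
begin

lemma matrix_vector_mult_axis_component:
  fixes A :: "'a::semiring_1 ^ 'n ^ 'm"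
  shows "(A *v axis j x) $ k = A $ k $ j * x"
  by (simp add: matrix_vector_mult_def axis_def if_distrib cong: if_cong)

lemma vasr_step_component:
  assumes "qvasr V" and "vasr_step V u w"
  shows "\<exists>a \<in> snd ` V. w $ k = a $ k \<or> w $ k = u $ k + a $ k"
proof -
  obtain r a where ra: "(r, a) \<in> V" and w: "w = (\<chi> i. r $ i * u $ i + a $ i)"
    using assms(2) unfolding vasr_step_def by blast
  have "r $ k = 0 \<or> r $ k = 1"
    using assms(1) ra unfolding qvasr_def by blast
  with w have "w $ k = a $ k \<or> w $ k = u $ k + a $ k"
    by auto
  with ra show ?thesis
    by force
qed

text \<open>If row k of T meets a dimension i kept by (r, a) and a dimension j reset by it, choose
  u supported on {i, j} with (T u) k = 0 and (T v) k = m for the successor v of u, where m is not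
  the k-th entry of any addition vector of V2: whether V2 resets or keeps dimension k, it would
  have to add m there.\<close>
lemma lin_sim_row_not_kept_and_reset:
  assumes "qvasr V2" and "lin_sim V1 T V2"
    and ra: "(r, a) \<in> V1" and ri: "r $ i = 1" and rj: "r $ j = 0"
    and Ti: "T $ k $ i \<noteq> 0" and Tj: "T $ k $ j \<noteq> 0"
  shows False
proof -
  have "finite ((\<lambda>a'. a' $ k) ` snd ` V2)"
    using assms(1) unfolding qvasr_def by simp
  then obtain m :: rat where m: "m \<notin> (\<lambda>a'. a' $ k) ` snd ` V2"
    using ex_new_if_finite[OF infinite_UNIV_char_0] by blast
  define c where "c = (T *v a) $ k"
  define x where "x = (m - c) / T $ k $ i"
  define y where "y = (c - m) / T $ k $ j"
  define u where "u = axis i x + axis j y"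
  define v where "v = (\<chi> l. r $ l * u $ l + a $ l)"
  have "v = axis i x + a"
    using ri rj by (auto simp: v_def u_def axis_def vec_eq_iff)
  then have Tv: "(T *v v) $ k = m"
    using Ti by (simp add: matrix_vector_right_distrib matrix_vector_mult_axis_component x_def c_def)
  have Tu: "(T *v u) $ k = 0"
    using Ti Tj by (simp add: u_def matrix_vector_right_distrib matrix_vector_mult_axis_component
        x_def y_def)
  have "vasr_step V1 u v"
    unfolding vasr_step_def v_def using ra by blast
  with assms(2) have "vasr_step V2 (T *v u) (T *v v)"
    unfolding lin_sim_def by blast
  then obtain a' where "a' \<in> snd ` V2"
    and "(T *v v) $ k = a' $ k \<or> (T *v v) $ k = (T *v u) $ k + a' $ k"
    using vasr_step_component[OF assms(1)] by blast
  with Tv Tu m show False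
    by force
qed

lemma lin_sim_resets_agree_on_row:
  assumes "qvasr V1" and "qvasr V2" and "lin_sim V1 T V2" and "(r, a) \<in> V1"
    and "T $ k $ i \<noteq> 0" and "T $ k $ j \<noteq> 0"
  shows "r $ i = r $ j"
proof -
  have "r $ i \<in> {0, 1}" and "r $ j \<in> {0, 1}"
    using assms(1,4) unfolding qvasr_def by blast+
  then show ?thesis
    using lin_sim_row_not_kept_and_reset[OF assms(2-4)] assms(5,6) by fastforce
qed

theorem lemma1:
  fixes V1 :: "((rat ^ 'd) \<times> (rat ^ 'd)) set"
    and V2 :: "((rat ^ 'e) \<times> (rat ^ 'e)) set"
    and T :: "rat ^ 'd ^ 'e"
  assumes "qvasr V1" and "qvasr V2" and "lin_sim V1 T V2"
  shows "coherent_matrix V1 T"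
  unfolding coherent_matrix_def
proof
  fix k
  show "\<exists>i. \<forall>j. T $ k $ j \<noteq> 0 \<longrightarrow> coherent_dims V1 i j"
  proof (cases "\<exists>i. T $ k $ i \<noteq> 0")
    case True
    then obtain i where "T $ k $ i \<noteq> 0"
      by blast
    then have "\<forall>j. T $ k $ j \<noteq> 0 \<longrightarrow> coherent_dims V1 i j"
      using lin_sim_resets_agree_on_row[OF assms] unfolding coherent_dims_def by blast
    then show ?thesis ..
  qed simp
qed

end
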